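(* Let $\mathcal{C}$ be a finite set of classes and let $(\ell_\star, \ell_1, \dots, \ell_K)$ be a random tuple of $\mathcal{C}$-valued labels ($\ell_\star$ the oracle label, $\ell_i$ the label of annotator $i$) such that $\mathbb{P}(\ell_i = \ell_\star \mid \ell_j = \ell_\star) \ge \mathbb{P}(\ell_i = \ell_\star)$ for all $i, j \in \{1,\dots,K\}$ with $\mathbb{P}(\ell_j = \ell_\star) > 0$. Let $(\ell_\star^{(n)}, \ell_1^{(n)}, \dots, \ell_K^{(n)})$, $n = 1, \dots, N$, be $N$ independent copies of this tuple (labels on $N$ independently sampled data points), and define the empirical agreement ratios $$\mathbb{P}^{(N)}(\ell_i = \ell_j) = \frac{1}{N}\sum_{n=1}^N \big[\ell_i^{(n)} = \ell_j^{(n)}\big].$$ Then for every $t_u > 0$, with probability at least $1 - \delta_u$ where $\delta_u = \exp(-2 N t_u^2)$, $$\frac{1}{K}\sum_{i=1}^K \mathbb{P}(\ell_i = \ell_\star) \le \sqrt{t_u + \frac{1}{K^2}\sum_{i=1}^K\sum_{j=1}^K \mathbb{P}^{(N)}(\ell_i = \ell_j)}.$$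
   Context: $[\cdot]$ denotes the Iverson bracket (1 if the statement holds, 0 otherwise). $\frac{1}{K}\sum_{i}\mathbb{P}(\ell_i = \ell_\star)$ is the oracle accuracy of the average annotator (an annotator chosen uniformly at random among the $K$). *)

theory Defs
  imports "HOL-Probability.Probability"
begin

text \<open>Labels on data point n: oracle label star n, annotator i label lab n i.
  Index n = 0 is the generic random tuple; n = 1..N are the N copies.\<close>

definition label_space :: "nat \<Rightarrow> ('c \<times> (nat \<Rightarrow> 'c)) measure" where
  "label_space K = count_space UNIV \<Otimes>\<^sub>M PiM {1..K} (\<lambda>_. count_space UNIV)"

definition label_tuple ::
  "nat \<Rightarrow> (nat \<Rightarrow> 'a \<Rightarrow> 'c) \<Rightarrow> (nat \<Rightarrow> nat \<Rightarrow> 'a \<Rightarrow> 'c) \<Rightarrow> nat \<Rightarrow> 'a \<Rightarrow> 'c \<times> (nat \<Rightarrow> 'c)" where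
  "label_tuple K star lab n \<omega> = (star n \<omega>, \<lambda>i\<in>{1..K}. lab n i \<omega>)"

definition emp_agree :: "nat \<Rightarrow> (nat \<Rightarrow> nat \<Rightarrow> 'a \<Rightarrow> 'c) \<Rightarrow> nat \<Rightarrow> nat \<Rightarrow> 'a \<Rightarrow> real" where
  "emp_agree N lab i j \<omega> = (1 / real N) * (\<Sum>n=1..N. of_bool (lab n i \<omega> = lab n j \<omega>))"

end

theory Submission imports Defs begin

text \<open>Positive correlation gives P(l_i = l_*) P(l_j = l_*) <= P(l_i = l_* = l_j) <= P(l_i = l_j),
  so the squared average accuracy is at most the expected agreement rate
  K^-2 sum_{i,j} P(l_i = l_j) of a single data point. This rate is a [0,1]-valued function of
  the label tuple, so by Hoeffding's inequality its empirical mean over the N independent data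
  points falls below its expectation by t_u only with probability at most exp(-2 N t_u^2);
  outside this event the squared average accuracy is at most t_u plus the empirical
  agreement rate.\<close>

lemma (in prob_space) prob_mult_le_prob_inter:
  assumes "prob B > 0 \<Longrightarrow> prob (A \<inter> B) / prob B \<ge> prob A"
  shows "prob A * prob B \<le> prob (A \<inter> B)"
proof (cases "prob B > 0")
  case True
  with assms show ?thesis by (simp add: le_divide_eq)
next
  case False
  then have "prob B = 0" using measure_nonneg[of M B] by linarith
  then show ?thesis by simp
qed

lemma (in prob_space) square_sum_prob_le_sum_prob_inter:
  assumes "\<And>i j. i \<in> I \<Longrightarrow> j \<in> I \<Longrightarrow>
      prob (A j) > 0 \<Longrightarrow> prob (A i \<inter> A j) / prob (A j) \<ge> prob (A i)"
  shows "(\<Sum>i\<in>I. prob (A i))\<^sup>2 \<le> (\<Sum>i\<in>I. \<Sum>j\<in>I. prob (A i \<inter> A j))"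
proof -
  have "(\<Sum>i\<in>I. prob (A i))\<^sup>2 = (\<Sum>i\<in>I. \<Sum>j\<in>I. prob (A i) * prob (A j))"
    by (simp add: power2_eq_square sum_product)
  also have "\<dots> \<le> (\<Sum>i\<in>I. \<Sum>j\<in>I. prob (A i \<inter> A j))"
    using assms by (intro sum_mono prob_mult_le_prob_inter) auto
  finally show ?thesis .
qed

lemma (in prob_space) expectation_sum_agreements:
  fixes Y :: "'i \<Rightarrow> 'a \<Rightarrow> 'c::countable"
  assumes "finite I" and [measurable]: "\<And>i. i \<in> I \<Longrightarrow> Y i \<in> measurable M (count_space UNIV)"
  shows "expectation (\<lambda>\<omega>. \<Sum>i\<in>I. \<Sum>j\<in>I. of_bool (Y i \<omega> = Y j \<omega>))
       = (\<Sum>i\<in>I. \<Sum>j\<in>I. prob {\<omega> \<in> space M. Y i \<omega> = Y j \<omega>})"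
proof -
  have agree_event: "{\<omega> \<in> space M. Y i \<omega> = Y j \<omega>} \<in> events" if "i \<in> I" "j \<in> I" for i j
    using that by measurable
  have "expectation (\<lambda>\<omega>. \<Sum>i\<in>I. \<Sum>j\<in>I. of_bool (Y i \<omega> = Y j \<omega>))
      = expectation (\<lambda>\<omega>. \<Sum>i\<in>I. \<Sum>j\<in>I. indicator {\<omega> \<in> space M. Y i \<omega> = Y j \<omega>} \<omega>)"
    by (intro Bochner_Integration.integral_cong) (auto simp: indicator_def)
  also have "\<dots> = (\<Sum>i\<in>I. \<Sum>j\<in>I. prob {\<omega> \<in> space M. Y i \<omega> = Y j \<omega>})"
    using assms(1) agree_event sets.sets_into_space[OF agree_event]
    by (simp add: Bochner_Integration.integral_sum emeasure_finite Int_absorb2 less_top[symmetric])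
  finally show ?thesis .
qed

lemma (in prob_space) square_sum_accuracy_le_expected_agreements:
  fixes Y :: "'i \<Rightarrow> 'a \<Rightarrow> 'c::countable" and Z :: "'a \<Rightarrow> 'c"
  assumes "finite I" and [measurable]: "\<And>i. i \<in> I \<Longrightarrow> Y i \<in> measurable M (count_space UNIV)"
    and [measurable]: "Z \<in> measurable M (count_space UNIV)"
    and pos_corr: "\<And>i j. i \<in> I \<Longrightarrow> j \<in> I \<Longrightarrow> prob {\<omega> \<in> space M. Y j \<omega> = Z \<omega>} > 0 \<Longrightarrow>
        prob {\<omega> \<in> space M. Y i \<omega> = Z \<omega> \<and> Y j \<omega> = Z \<omega>} / prob {\<omega> \<in> space M. Y j \<omega> = Z \<omega>}
        \<ge> prob {\<omega> \<in> space M. Y i \<omega> = Z \<omega>}"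
  shows "(\<Sum>i\<in>I. prob {\<omega> \<in> space M. Y i \<omega> = Z \<omega>})\<^sup>2
       \<le> expectation (\<lambda>\<omega>. \<Sum>i\<in>I. \<Sum>j\<in>I. of_bool (Y i \<omega> = Y j \<omega>))"
proof -
  define correct where "correct i = {\<omega> \<in> space M. Y i \<omega> = Z \<omega>}" for i
  have "correct i \<inter> correct j = {\<omega> \<in> space M. Y i \<omega> = Z \<omega> \<and> Y j \<omega> = Z \<omega>}" for i j
    by (auto simp: correct_def)
  then have "(\<Sum>i\<in>I. prob (correct i))\<^sup>2 \<le> (\<Sum>i\<in>I. \<Sum>j\<in>I. prob (correct i \<inter> correct j))"
    using pos_corr by (intro square_sum_prob_le_sum_prob_inter) (simp add: correct_def)
  also have "\<dots> \<le> (\<Sum>i\<in>I. \<Sum>j\<in>I. prob {\<omega> \<in> space M. Y i \<omega> = Y j \<omega>})"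
    by (intro sum_mono finite_measure_mono) (auto simp: correct_def)
  also have "\<dots> = expectation (\<lambda>\<omega>. \<Sum>i\<in>I. \<Sum>j\<in>I. of_bool (Y i \<omega> = Y j \<omega>))"
    using assms(1,2) by (rule expectation_sum_agreements[symmetric])
  finally show ?thesis by (simp add: correct_def)
qed

lemma (in prob_space) Hoeffding_iid_sample_mean_le:
  fixes f :: "'b \<Rightarrow> real" and t :: real
  assumes indep: "indep_vars (\<lambda>_. S) T I" and "finite I"
    and T0: "T0 \<in> measurable M S"
    and ident: "\<And>i. i \<in> I \<Longrightarrow> distr M S (T i) = distr M S T0"
    and f: "f \<in> borel_measurable S" "\<And>x. x \<in> space S \<Longrightarrow> f x \<in> {a..b}" "a < b"
    and "t \<ge> 0"
  shows "prob {\<omega> \<in> space M. (\<Sum>i\<in>I. f (T i \<omega>)) / card I \<le> expectation (\<lambda>\<omega>. f (T0 \<omega>)) - t}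
       \<le> exp (-2 * real (card I) * t\<^sup>2 / (b - a)\<^sup>2)"
proof (cases "I = {}")
  case False
  have "distr M borel (\<lambda>\<omega>. f (T i \<omega>)) = distr M borel (\<lambda>\<omega>. f (T0 \<omega>))" if "i \<in> I" for i
  proof -
    have "T i \<in> measurable M S"
      using indep that by (auto simp: indep_vars_def)
    then show ?thesis
      using distr_distr[OF f(1) T0] distr_distr[OF f(1) \<open>T i \<in> measurable M S\<close>] ident[OF that]
      by (simp add: comp_def)
  qed
  moreover have "AE \<omega> in M. f (T0 \<omega>) \<in> {a..b}"
    using f(2) measurable_space[OF T0] by simp
  ultimately interpret Hoeffding_ineq_iid M I "\<lambda>i \<omega>. f (T i \<omega>)" "\<lambda>\<omega>. f (T0 \<omega>)" a b
      "expectation (\<lambda>\<omega>. f (T0 \<omega>))"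
    using \<open>finite I\<close> indep_vars_compose2[OF indep f(1)] T0 f(1) by unfold_locales simp_all
  show ?thesis
    using Hoeffding_ineq_le' \<open>t \<ge> 0\<close> \<open>a < b\<close> False by simp
qed simp

lemma measurable_label_tuple:
  assumes "star n \<in> measurable M (count_space UNIV)"
    and "\<And>i. lab n i \<in> measurable M (count_space UNIV)"
  shows "label_tuple K star lab n \<in> measurable M (label_space K)"
  unfolding label_space_def label_tuple_def
  by (intro measurable_Pair measurable_restrict) (auto intro: assms)

definition agreement_rate :: "nat \<Rightarrow> 'c \<times> (nat \<Rightarrow> 'c) \<Rightarrow> real" where
  "agreement_rate K x = (\<Sum>i=1..K. \<Sum>j=1..K. of_bool (snd x i = snd x j)) / (real K)\<^sup>2"

lemma measurable_agreement_rate: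
  "agreement_rate K \<in> borel_measurable (label_space K :: ('c::countable \<times> _) measure)"
  unfolding agreement_rate_def label_space_def by measurable

lemma agreement_rate_bounds: "agreement_rate K x \<in> {0..1}"
proof -
  have "(\<Sum>i=1..K. \<Sum>j=1..K. of_bool (snd x i = snd x j)) \<le> (\<Sum>i=1..K. \<Sum>j=1..K. 1::real)"
    by (intro sum_mono) auto
  then show ?thesis
    by (cases "K = 0") (auto simp: agreement_rate_def power2_eq_square field_simps sum_nonneg)
qed

lemma agreement_rate_label_tuple:
  "agreement_rate K (label_tuple K star lab n \<omega>)
     = (\<Sum>i=1..K. \<Sum>j=1..K. of_bool (lab n i \<omega> = lab n j \<omega>)) / (real K)\<^sup>2"
  unfolding agreement_rate_def label_tuple_def by (auto intro!: sum.cong)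

lemma sum_emp_agree_eq_mean_agreement_rate:
  "(1 / (real K)\<^sup>2) * (\<Sum>i=1..K. \<Sum>j=1..K. emp_agree N lab i j \<omega>)
     = (\<Sum>n=1..N. agreement_rate K (label_tuple K star lab n \<omega>)) / real N"
proof -
  define agree where "agree n i j = (of_bool (lab n i \<omega> = lab n j \<omega>) :: real)" for n i j
  have "(\<Sum>i=1..K. \<Sum>j=1..K. \<Sum>n=1..N. agree n i j) = (\<Sum>i=1..K. \<Sum>n=1..N. \<Sum>j=1..K. agree n i j)"
    by (intro sum.cong refl sum.swap)
  also have "\<dots> = (\<Sum>n=1..N. \<Sum>i=1..K. \<Sum>j=1..K. agree n i j)"
    by (rule sum.swap)
  finally show ?thesis
    unfolding emp_agree_def agreement_rate_label_tuple agree_def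
    by (simp add: sum_distrib_left sum_divide_distrib[symmetric] mult_ac)
qed

theorem theorem5:
  fixes M :: "'a measure" and N K :: nat
    and star :: "nat \<Rightarrow> 'a \<Rightarrow> 'c::finite"
    and lab :: "nat \<Rightarrow> nat \<Rightarrow> 'a \<Rightarrow> 'c"
    and t_u :: real
  assumes "prob_space M"
    and star_meas: "\<And>n. star n \<in> measurable M (count_space UNIV)"
    and lab_meas: "\<And>n i. lab n i \<in> measurable M (count_space UNIV)"
    and pos_corr: "\<And>i j. i \<in> {1..K} \<Longrightarrow> j \<in> {1..K} \<Longrightarrow>
        measure M {\<omega> \<in> space M. lab 0 j \<omega> = star 0 \<omega>} > 0 \<Longrightarrow>
        measure M {\<omega> \<in> space M. lab 0 i \<omega> = star 0 \<omega> \<and> lab 0 j \<omega> = star 0 \<omega>}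
          / measure M {\<omega> \<in> space M. lab 0 j \<omega> = star 0 \<omega>}
        \<ge> measure M {\<omega> \<in> space M. lab 0 i \<omega> = star 0 \<omega>}"
    and ident: "\<And>n. n \<in> {1..N} \<Longrightarrow>
        distr M (label_space K) (label_tuple K star lab n) = distr M (label_space K) (label_tuple K star lab 0)"
    and indep: "prob_space.indep_vars M (\<lambda>_. label_space K) (label_tuple K star lab) {1..N}"
    and "t_u > 0"
  shows "measure M {\<omega> \<in> space M.
           (1 / real K) * (\<Sum>i=1..K. measure M {\<omega>' \<in> space M. lab 0 i \<omega>' = star 0 \<omega>'})
             \<le> sqrt (t_u + (1 / (real K)^2) * (\<Sum>i=1..K. \<Sum>j=1..K. emp_agree N lab i j \<omega>))}
         \<ge> 1 - exp (-2 * real N * t_u^2)"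
proof -
  interpret prob_space M by fact
  note [measurable] = star_meas lab_meas
  define accuracy where
    "accuracy = (1 / real K) * (\<Sum>i=1..K. prob {\<omega>' \<in> space M. lab 0 i \<omega>' = star 0 \<omega>'})"
  define X where "X n \<omega> = agreement_rate K (label_tuple K star lab n \<omega>)" for n \<omega>
  define good where "good = {\<omega> \<in> space M. accuracy
      \<le> sqrt (t_u + (1 / (real K)^2) * (\<Sum>i=1..K. \<Sum>j=1..K. emp_agree N lab i j \<omega>))}"
  define bad where "bad = {\<omega> \<in> space M. (\<Sum>n=1..N. X n \<omega>) / real N \<le> expectation (X 0) - t_u}"
  have sum_accuracy_sq: "(\<Sum>i=1..K. prob {\<omega> \<in> space M. lab 0 i \<omega> = star 0 \<omega>})\<^sup>2
      \<le> expectation (\<lambda>\<omega>. \<Sum>i=1..K. \<Sum>j=1..K. of_bool (lab 0 i \<omega> = lab 0 j \<omega>))"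
    using pos_corr by (intro square_sum_accuracy_le_expected_agreements) auto
  have accuracy_sq: "accuracy\<^sup>2 \<le> expectation (X 0)"
    unfolding accuracy_def X_def agreement_rate_label_tuple Bochner_Integration.integral_divide_zero
    using divide_right_mono[OF sum_accuracy_sq zero_le_power2[of "real K"]] by (simp add: power_divide)
  have "accuracy \<ge> 0"
    by (simp add: accuracy_def sum_nonneg)
  have "bad \<in> events"
    unfolding bad_def X_def agreement_rate_label_tuple by measurable
  have "good \<in> events"
    unfolding good_def emp_agree_def by measurable
  have "space M - bad \<subseteq> good"
    unfolding good_def sum_emp_agree_eq_mean_agreement_rate[where star = star]
    using accuracy_sq \<open>accuracy \<ge> 0\<close> by (auto simp: bad_def X_def intro!: real_le_rsqrt)
  then have "1 - prob bad \<le> prob good"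
    using \<open>bad \<in> events\<close> \<open>good \<in> events\<close> by (simp add: finite_measure_mono flip: prob_compl)
  moreover have "prob bad \<le> exp (-2 * real N * t_u\<^sup>2)"
    using Hoeffding_iid_sample_mean_le[OF indep _ measurable_label_tuple ident
        measurable_agreement_rate agreement_rate_bounds _ less_imp_le[OF \<open>t_u > 0\<close>]]
    by (simp add: bad_def X_def[abs_def])
  ultimately show ?thesis
    unfolding good_def accuracy_def by linarith
qed

end
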